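(* Let $K\subseteq\mathbb{R}^d$ be a convex set, $x\in\mathbb{B}$ a direction, and $h$ a hyperplane orthogonal to $x$. Let $H$ be one of the two closed half-spaces induced by $h$, such that $\mathrm{proj}(H,x)$ contains an $\alpha$ fraction of $\mathrm{proj}(K,x)$, for some $\alpha\in[0,1]$. Then for any $z\le \alpha\,\mathrm{width}(K,x)$, \[\mathrm{vol}((K\setminus H)+z\mathbb{B})\le\Big(1-\Big(\frac{\alpha}{1+2\alpha}\Big)^d\Big)\,\mathrm{vol}(K+z\mathbb{B}).\]
   Context: $\mathbb{B}=\{w\in\mathbb{R}^d:\|w\|_2\le1\}$ is the Euclidean unit ball; $A+z\mathbb{B}=\{y+zw: y\in A, w\in\mathbb{B}\}$ is the Minkowski sum; $\mathrm{vol}$ is $d$-dimensional Lebesgue volume. For a set $A$, $\mathrm{proj}(A,x)=\{\langle v,x\rangle: v\in A\}$, and $\mathrm{width}(K,x)=\max_{v\in K}\langle v,x\rangle-\min_{v\in K}\langle v,x\rangle$ is the length of the interval $\mathrm{proj}(K,x)$. "$\mathrm{proj}(H,x)$ contains an $\alpha$ fraction of $\mathrm{proj}(K,x)$" means the intersection $\mathrm{proj}(H,x)\cap\mathrm{proj}(K,x)$ has length $\alpha\,\mathrm{width}(K,x)$. *)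

theory Defs
  imports "HOL-Analysis.Analysis"
begin

definition mink_ball :: "'a::euclidean_space set \<Rightarrow> real \<Rightarrow> 'a set" where
  "mink_ball A z = {y + z *\<^sub>R w | y w. y \<in> A \<and> w \<in> cball 0 1}"

definition proj :: "'a::euclidean_space set \<Rightarrow> 'a \<Rightarrow> real set" where
  "proj A x = (\<lambda>v. inner v x) ` A"

text \<open>width(K,x) = max_{v in K} <v,x> - min_{v in K} <v,x> (K compact nonempty).\<close>
definition width :: "'a::euclidean_space set \<Rightarrow> 'a \<Rightarrow> real" where
  "width K x = Sup (proj K x) - Inf (proj K x)"

end

theory Submission
  imports Defs
begin

(* Let w be the width of K in direction x and let p be a point of K where v \<mapsto> v \<bullet> x attains
   its minimum m.  Every point of K - H lies at level at least m + \<alpha> w, so every point of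
   (K - H) + zB lies at level at least L = m + \<alpha> w - z |x|.  Shrink S = K + zB by the factor
   \<beta> = \<alpha>/(1 + 2\<alpha>) towards its lowest point q = p - z x/|x|.  The shrunken copy lies in S,
   has volume \<beta>^d vol S, and lies at level at most L because z |x| \<le> \<alpha> w.  Hence it is
   separated from (K - H) + zB by a hyperplane inside S.  For the other half-space replace
   x by -x. *)

lemma mink_ball_mono: "A \<subseteq> B \<Longrightarrow> mink_ball A z \<subseteq> mink_ball B z"
  unfolding mink_ball_def by blast

lemma mink_ball_eq_linear_image:
  "mink_ball A z = (\<lambda>(y, w). y + z *\<^sub>R w) ` (A \<times> cball 0 1)"
  unfolding mink_ball_def by force

lemma linear_mink_ball_map: "linear (\<lambda>(y, w). y + z *\<^sub>R w)"
  by (auto simp: linear_iff algebra_simps)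

lemma convex_mink_ball:
  fixes A :: "'a::euclidean_space set"
  assumes "convex A"
  shows "convex (mink_ball A z)"
  unfolding mink_ball_eq_linear_image
  using assms by (intro convex_linear_image convex_Times linear_mink_ball_map) auto

lemma bounded_mink_ball:
  fixes A :: "'a::euclidean_space set"
  assumes "bounded A"
  shows "bounded (mink_ball A z)"
  unfolding mink_ball_eq_linear_image
  using assms linear_conv_bounded_linear[THEN iffD1, OF linear_mink_ball_map]
  by (intro bounded_linear_image bounded_Times) auto

lemma lmeasurable_mink_ball:
  fixes A :: "'a::euclidean_space set"
  assumes "convex A" "bounded A"
  shows "mink_ball A z \<in> lmeasurable"
  using assms by (intro measurable_convex convex_mink_ball bounded_mink_ball)

lemma inner_mink_ball_le:
  fixes A :: "'a::euclidean_space set"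
  assumes "\<forall>v\<in>A. v \<bullet> u \<le> M" "0 \<le> z" "y \<in> mink_ball A z"
  shows "y \<bullet> u \<le> M + z * norm u"
proof -
  obtain v w where y: "y = v + z *\<^sub>R w" "v \<in> A" "norm w \<le> 1"
    using assms(3) unfolding mink_ball_def by auto
  have "w \<bullet> u \<le> norm w * norm u" by (rule norm_cauchy_schwarz)
  also have "\<dots> \<le> norm u" using y(3) by (simp add: mult_left_le_one_le)
  finally have "z * (w \<bullet> u) \<le> z * norm u" using assms(2) by (rule mult_left_mono)
  then show ?thesis using y assms(1) by (auto simp: inner_add_left)
qed

lemma inner_mink_ball_ge:
  fixes A :: "'a::euclidean_space set"
  assumes "\<forall>v\<in>A. M \<le> v \<bullet> u" "0 \<le> z" "y \<in> mink_ball A z"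
  shows "M - z * norm u \<le> y \<bullet> u"
  using inner_mink_ball_le[of A "- u" "- M" z y] assms by simp

lemma measure_le_diff_if_separated_by_hyperplane:
  fixes S T C :: "'a::euclidean_space set"
  assumes "S \<in> lmeasurable" "T \<in> lmeasurable" "C \<in> lmeasurable" "T \<subseteq> S" "C \<subseteq> S"
    and "u \<noteq> 0" "\<forall>c\<in>C. c \<bullet> u \<le> L" "\<forall>t\<in>T. L \<le> t \<bullet> u"
  shows "measure lebesgue T \<le> measure lebesgue S - measure lebesgue C"
proof -
  have "T \<inter> C \<subseteq> {v. u \<bullet> v = L}"
    using assms(7,8) by (force simp: inner_commute)
  then have "negligible (T \<inter> C)"
    using negligible_hyperplane[of u L] assms(6) negligible_subset by blast
  then have "measure lebesgue T = measure lebesgue (T - (T \<inter> C))"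
    using assms(2) by (simp add: measure_Diff_null_set negligible_iff_null_sets)
  also have "\<dots> \<le> measure lebesgue (S - C)"
    using assms by (intro measure_mono_fmeasurable) auto
  also have "\<dots> = measure lebesgue S - measure lebesgue C"
    using assms by (intro measure_Diff) (auto simp: fmeasurable_def)
  finally show ?thesis .
qed

lemma homothetic_copy_of_convex:
  fixes S :: "'a::euclidean_space set"
  assumes "convex S" "bounded S" "q \<in> S" "0 \<le> \<beta>" "\<beta> \<le> 1"
  defines "C \<equiv> (\<lambda>y. \<beta> *\<^sub>R y + (1 - \<beta>) *\<^sub>R q) ` S"
  shows "C \<subseteq> S" "C \<in> lmeasurable" "measure lebesgue C = \<beta> ^ DIM('a) * measure lebesgue S"
proof -
  show "C \<subseteq> S"
    using assms(1,3-5) unfolding C_def convex_def by auto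
  have "C = (\<lambda>y. (1 - \<beta>) *\<^sub>R q + \<beta> *\<^sub>R y) ` S"
    unfolding C_def by (simp add: add.commute)
  then have "convex C"
    using convex_affinity[OF assms(1)] by simp
  then show "C \<in> lmeasurable"
    using \<open>C \<subseteq> S\<close> assms(2) by (intro measurable_convex) (auto intro: bounded_subset)
  show "measure lebesgue C = \<beta> ^ DIM('a) * measure lebesgue S"
    unfolding C_def using measure_lebesgue_affine[of \<beta> "(1 - \<beta>) *\<^sub>R q" S] assms(4) by simp
qed

lemma measure_mink_ball_far_part_le:
  fixes K A :: "'a::euclidean_space set" and u p :: 'a
  assumes "convex K" "bounded K" "convex A" "A \<subseteq> K" "u \<noteq> 0" "p \<in> K"
    and K_below: "\<forall>v\<in>K. v \<bullet> u \<le> p \<bullet> u + w"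
    and A_above: "\<forall>v\<in>A. p \<bullet> u + \<alpha> * w \<le> v \<bullet> u"
    and "0 \<le> \<alpha>" "0 \<le> z" "z * norm u \<le> \<alpha> * w"
  shows "measure lebesgue (mink_ball A z)
           \<le> (1 - (\<alpha> / (1 + 2 * \<alpha>)) ^ DIM('a)) * measure lebesgue (mink_ball K z)"
proof -
  define \<beta> where "\<beta> = \<alpha> / (1 + 2 * \<alpha>)"
  define S where "S = mink_ball K z"
  define q where "q = p - (z / norm u) *\<^sub>R u"
  define C where "C = (\<lambda>y. \<beta> *\<^sub>R y + (1 - \<beta>) *\<^sub>R q) ` S"
  define L where "L = p \<bullet> u + \<alpha> * w - z * norm u"
  have \<beta>: "0 \<le> \<beta>" "\<beta> \<le> 1" "\<beta> * (1 + 2 * \<alpha>) = \<alpha>"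
    using \<open>0 \<le> \<alpha>\<close> by (auto simp: \<beta>_def field_simps)
  have "q \<in> S"
    unfolding S_def mink_ball_def q_def using \<open>p \<in> K\<close> \<open>u \<noteq> 0\<close>
    by (intro CollectI exI[of _ p] exI[of _ "- (1 / norm u) *\<^sub>R u"]) auto
  have q_level: "q \<bullet> u = p \<bullet> u - z * norm u"
    using \<open>u \<noteq> 0\<close> by (simp add: q_def inner_diff_left dot_square_norm power2_eq_square)
  have S: "convex S" "bounded S" "S \<in> lmeasurable"
    unfolding S_def using assms(1,2) by (auto intro: convex_mink_ball bounded_mink_ball lmeasurable_mink_ball)
  note C = homothetic_copy_of_convex[OF S(1,2) \<open>q \<in> S\<close> \<beta>(1,2), folded C_def]
  have C_below: "c \<bullet> u \<le> L" if c: "c \<in> C" for c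
  proof -
    obtain y where y: "y \<in> S" "c = \<beta> *\<^sub>R y + (1 - \<beta>) *\<^sub>R q"
      using c unfolding C_def by auto
    have "y \<bullet> u \<le> p \<bullet> u + w + z * norm u"
      using inner_mink_ball_le[OF K_below \<open>0 \<le> z\<close>] y(1) unfolding S_def by blast
    then have "c \<bullet> u \<le> \<beta> * (p \<bullet> u + w + z * norm u) + (1 - \<beta>) * (p \<bullet> u - z * norm u)"
      using y(2) q_level \<beta>(1) by (simp add: inner_add_left mult_left_mono)
    also have "\<dots> = p \<bullet> u - z * norm u + \<beta> * (w + 2 * (z * norm u))"
      by (simp add: algebra_simps)
    also have "\<dots> \<le> p \<bullet> u - z * norm u + \<beta> * (w * (1 + 2 * \<alpha>))"
      using \<open>z * norm u \<le> \<alpha> * w\<close> \<beta>(1) by (intro add_left_mono mult_left_mono) (auto simp: algebra_simps)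
    also have "\<dots> = L"
      using \<beta>(3) by (simp add: L_def mult.left_commute[of \<beta> w])
    finally show ?thesis .
  qed
  have T_above: "L \<le> t \<bullet> u" if "t \<in> mink_ball A z" for t
    using inner_mink_ball_ge[OF A_above \<open>0 \<le> z\<close> that] by (simp add: L_def)
  have "mink_ball A z \<subseteq> S"
    unfolding S_def using \<open>A \<subseteq> K\<close> by (rule mink_ball_mono)
  moreover have "mink_ball A z \<in> lmeasurable"
    using assms(2-4) by (intro lmeasurable_mink_ball) (auto intro: bounded_subset)
  ultimately have "measure lebesgue (mink_ball A z) \<le> measure lebesgue S - measure lebesgue C"
    using S(3) C(1,2) \<open>u \<noteq> 0\<close> C_below T_above
    by (intro measure_le_diff_if_separated_by_hyperplane) auto
  also note C(3)
  finally show ?thesis by (simp add: S_def \<beta>_def algebra_simps)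
qed

lemma proj_convex_compact_interval:
  fixes K :: "'a::euclidean_space set"
  assumes "convex K" "compact K" "K \<noteq> {}"
  obtains a b where "proj K x = {a..b}" "a \<le> b"
proof -
  have cont: "continuous_on K (\<lambda>v. v \<bullet> x)"
    by (intro continuous_intros)
  have "connected (proj K x)" "compact (proj K x)"
    unfolding proj_def using assms cont
    by (auto intro: connected_continuous_image convex_connected compact_continuous_image)
  then obtain a b where "proj K x = {a..b}"
    using connected_compact_interval_1 by blast
  moreover have "proj K x \<noteq> {}"
    using assms(3) unfolding proj_def by simp
  ultimately show thesis
    using that by fastforce
qed

lemma proj_inner_preimage:
  fixes x :: "'a::euclidean_space"
  assumes "x \<noteq> 0"
  shows "proj {v. P (v \<bullet> x)} x = {t. P t}"
proof -
  have "((t / (x \<bullet> x)) *\<^sub>R x) \<bullet> x = t" for t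
    using assms by simp
  then show ?thesis
    unfolding proj_def by (auto intro: image_eqI[of _ _ "(_ / (x \<bullet> x)) *\<^sub>R x"])
qed

lemma inner_outside_lower_halfspace_ge:
  fixes K :: "'a::euclidean_space set"
  assumes "x \<noteq> 0" "proj K x = {a..b}"
    and "measure lborel (proj {v. v \<bullet> x \<le> c} x \<inter> proj K x) = \<alpha> * (b - a)"
    and "v \<in> K" "c < v \<bullet> x"
  shows "a + \<alpha> * (b - a) \<le> v \<bullet> x"
proof -
  have meas: "measure lborel ({..c} \<inter> {a..b}) = \<alpha> * (b - a)"
    using assms(2,3) proj_inner_preimage[OF assms(1), of "\<lambda>t. t \<le> c"] by (simp add: atMost_def)
  have v: "v \<bullet> x \<in> {a..b}"
    using assms(2,4) unfolding proj_def by blast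
  show ?thesis
  proof (cases "c < a")
    case True
    then have "\<alpha> * (b - a) = 0" using meas by simp
    then show ?thesis using v by (metis add_0_right atLeastAtMost_iff)
  next
    case False
    then have "{..c} \<inter> {a..b} = {a..c}" using v assms(5) by auto
    then show ?thesis using meas False assms(5) by simp
  qed
qed

lemma inner_outside_upper_halfspace_le:
  fixes K :: "'a::euclidean_space set"
  assumes "x \<noteq> 0" "proj K x = {a..b}"
    and "measure lborel (proj {v. c \<le> v \<bullet> x} x \<inter> proj K x) = \<alpha> * (b - a)"
    and "v \<in> K" "v \<bullet> x < c"
  shows "v \<bullet> x \<le> b - \<alpha> * (b - a)"
proof -
  have meas: "measure lborel ({c..} \<inter> {a..b}) = \<alpha> * (b - a)"
    using assms(2,3) proj_inner_preimage[OF assms(1), of "\<lambda>t. c \<le> t"] by (simp add: atLeast_def)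
  have v: "v \<bullet> x \<in> {a..b}"
    using assms(2,4) unfolding proj_def by blast
  show ?thesis
  proof (cases "b < c")
    case True
    then have "\<alpha> * (b - a) = 0" using meas by simp
    then show ?thesis using v by (metis diff_0_right atLeastAtMost_iff)
  next
    case False
    then have "{c..} \<inter> {a..b} = {c..b}" using v assms(5) by auto
    then show ?thesis using meas False assms(5) by simp
  qed
qed

lemma convex_diff_halfspace:
  fixes K :: "'a::euclidean_space set"
  assumes "convex K" "H = {v. v \<bullet> x \<le> c} \<or> H = {v. c \<le> v \<bullet> x}"
  shows "convex (K - H)"
proof -
  have "- H = {v. x \<bullet> v > c} \<or> - H = {v. x \<bullet> v < c}"
    using assms(2) by (auto simp: inner_commute)
  then have "convex (- H)"
    using convex_halfspace_gt convex_halfspace_lt by metis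
  then show ?thesis
    using assms(1) by (simp add: Diff_eq convex_Int)
qed

lemma supporting_direction_for_halfspace_complement:
  fixes K :: "'a::euclidean_space set"
  assumes "convex K" "compact K" "K \<noteq> {}" "x \<noteq> 0"
    and H: "H = {v. v \<bullet> x \<le> c} \<or> H = {v. c \<le> v \<bullet> x}"
    and "measure lborel (proj H x \<inter> proj K x) = \<alpha> * width K x"
  obtains u p where "norm u = norm x" "u \<noteq> 0" "p \<in> K"
    "\<forall>v\<in>K. v \<bullet> u \<le> p \<bullet> u + width K x"
    "\<forall>v\<in>K - H. p \<bullet> u + \<alpha> * width K x \<le> v \<bullet> u"
proof -
  obtain a b where proj_K: "proj K x = {a..b}" "a \<le> b"
    using proj_convex_compact_interval assms(1-3) by blast
  then have width: "width K x = b - a"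
    unfolding width_def by simp
  have K_slab: "a \<le> v \<bullet> x \<and> v \<bullet> x \<le> b" if "v \<in> K" for v
    using proj_K that unfolding proj_def by auto
  show thesis
  proof (cases "H = {v. v \<bullet> x \<le> c}")
    case True
    obtain p where p: "p \<in> K" "p \<bullet> x = a"
      using proj_K unfolding proj_def by (metis atLeastAtMost_iff imageE order_refl)
    have "p \<bullet> x + \<alpha> * (b - a) \<le> v \<bullet> x" if "v \<in> K - H" for v
      using inner_outside_lower_halfspace_ge[OF assms(4) proj_K(1), of c \<alpha> v] that True assms(6) width p(2)
      by auto
    then show thesis
      using that[of x p] p assms(4) K_slab width by auto
  next
    case False
    with H have "H = {v. c \<le> v \<bullet> x}"
      by blast
    obtain p where p: "p \<in> K" "p \<bullet> x = b"
      using proj_K unfolding proj_def by (metis atLeastAtMost_iff imageE order_refl)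
    have "p \<bullet> - x + \<alpha> * (b - a) \<le> v \<bullet> - x" if "v \<in> K - H" for v
      using inner_outside_upper_halfspace_le[OF assms(4) proj_K(1), of c \<alpha> v] that
        \<open>H = {v. c \<le> v \<bullet> x}\<close> assms(6) width p(2)
      by auto
    then show thesis
      using that[of "- x" p] p assms(4) K_slab width by auto
  qed
qed

theorem lemma4p5:
  fixes K :: "'a::euclidean_space set" and x :: 'a
    and c \<alpha> z :: real and H :: "'a set"
  assumes "convex K" and "compact K" and "K \<noteq> {}"
    and "x \<noteq> 0" and "norm x \<le> 1"
    and "H = {v. inner v x \<le> c} \<or> H = {v. inner v x \<ge> c}"
    and "0 \<le> \<alpha>" and "\<alpha> \<le> 1"
    and "measure lborel (proj H x \<inter> proj K x) = \<alpha> * width K x"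
    and "0 \<le> z" and "z \<le> \<alpha> * width K x"
  shows "measure lebesgue (mink_ball (K - H) z)
           \<le> (1 - (\<alpha> / (1 + 2 * \<alpha>)) ^ DIM('a)) * measure lebesgue (mink_ball K z)"
proof -
  obtain u p where u: "norm u = norm x" "u \<noteq> 0" and "p \<in> K"
    and "\<forall>v\<in>K. v \<bullet> u \<le> p \<bullet> u + width K x"
    and "\<forall>v\<in>K - H. p \<bullet> u + \<alpha> * width K x \<le> v \<bullet> u"
    using supporting_direction_for_halfspace_complement assms(1-4,6,9) by blast
  moreover have "convex (K - H)"
    using convex_diff_halfspace assms(1,6) by blast
  moreover have "z * norm u \<le> \<alpha> * width K x"
    using assms(5,10,11) u(1) by (metis mult_left_le order_trans)
  ultimately show ?thesis
    using measure_mink_ball_far_part_le[of K "K - H" u p "width K x" \<alpha> z] assms(1,2,7,10)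
    by (auto simp: compact_imp_bounded)
qed

end
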